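(* Let $\mathcal C$ be a pointed category with finite coproducts, $F\colon\mathcal C\to Ab$ a reduced functor and $X\in\mathcal C$. Then $$T_2F(X)=F(X)\Big/\Big\{\big(\nabla^3_*-(\nabla^2r_{12})_*-(\nabla^2r_{13})_*-(\nabla^2r_{23})_*+r_{1*}+r_{2*}+r_{3*}\big)(x)\ :\ x\in F(X\vee X\vee X)\Big\},$$ where $g_*=F(g)$.
   Context: - $\nabla^n\colon X^{\vee n}\to X$ is the folding map. - $r_k\colon X\vee X\vee X\to X$ is the retraction onto the $k$-th summand. - $r_{jk}\colon X\vee X\vee X\to X\vee X$ ($j<k$) maps the $j$-th and $k$-th summands identically onto the first and second summand and the remaining summand to $0$. - For a reduced $F$: $cr_2F(X,Y)=\ker(F(X\vee Y)\to F(X)\oplus F(Y))$ and $cr_3F(X,Y,Z)=cr_2(cr_2F(-,Z))(X,Y)$, a subgroup of $F(X\vee Y\vee Z)$. - $T_2F(X)$ is defined as the cokernel of $cr_3F(X,X,X)\subseteq F(X^{\vee3})\xrightarrow{F(\nabla^3)}F(X)$. *)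

theory Defs
  imports "HOL-Algebra.Coset"
begin

record ('o, 'm) pcat =
  Obj :: "'o set"
  Arr :: "'m set"
  Dom :: "'m \<Rightarrow> 'o"
  Cod :: "'m \<Rightarrow> 'o"
  Idm :: "'o \<Rightarrow> 'm"
  Comp :: "'m \<Rightarrow> 'm \<Rightarrow> 'm"   (* Comp g f = g o f *)
  ZeroObj :: "'o"
  Cop :: "'o \<Rightarrow> 'o \<Rightarrow> 'o"
  In1 :: "'o \<Rightarrow> 'o \<Rightarrow> 'm"
  In2 :: "'o \<Rightarrow> 'o \<Rightarrow> 'm"
  Copair :: "'m \<Rightarrow> 'm \<Rightarrow> 'm"

definition hom_set :: "('o,'m,'x) pcat_scheme \<Rightarrow> 'o \<Rightarrow> 'o \<Rightarrow> 'm set" where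
  "hom_set C A B = {f \<in> Arr C. Dom C f = A \<and> Cod C f = B}"

definition is_category :: "('o,'m,'x) pcat_scheme \<Rightarrow> bool" where
  "is_category C \<longleftrightarrow>
     (\<forall>f \<in> Arr C. Dom C f \<in> Obj C \<and> Cod C f \<in> Obj C) \<and>
     (\<forall>A \<in> Obj C. Idm C A \<in> hom_set C A A) \<and>
     (\<forall>f \<in> Arr C. \<forall>g \<in> Arr C. Cod C f = Dom C g \<longrightarrow>
         Comp C g f \<in> hom_set C (Dom C f) (Cod C g)) \<and>
     (\<forall>f \<in> Arr C. Comp C (Idm C (Cod C f)) f = f \<and> Comp C f (Idm C (Dom C f)) = f) \<and>
     (\<forall>f \<in> Arr C. \<forall>g \<in> Arr C. \<forall>h \<in> Arr C. Cod C f = Dom C g \<longrightarrow> Cod C g = Dom C h \<longrightarrow>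
         Comp C h (Comp C g f) = Comp C (Comp C h g) f)"

text \<open>A pointed category: ZeroObj is a zero object (initial and terminal).
  Finite coproducts: binary coproducts (chosen) plus the initial object ZeroObj.\<close>
definition pointed_cat_fin_coprod :: "('o,'m,'x) pcat_scheme \<Rightarrow> bool" where
  "pointed_cat_fin_coprod C \<longleftrightarrow>
     is_category C \<and>
     ZeroObj C \<in> Obj C \<and>
     (\<forall>A \<in> Obj C. \<exists>!f. f \<in> hom_set C (ZeroObj C) A) \<and>
     (\<forall>A \<in> Obj C. \<exists>!f. f \<in> hom_set C A (ZeroObj C)) \<and>
     (\<forall>A \<in> Obj C. \<forall>B \<in> Obj C.
        Cop C A B \<in> Obj C \<and>
        In1 C A B \<in> hom_set C A (Cop C A B) \<and>
        In2 C A B \<in> hom_set C B (Cop C A B)) \<and>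
     (\<forall>u \<in> Arr C. \<forall>v \<in> Arr C. Cod C u = Cod C v \<longrightarrow>
        Copair C u v \<in> hom_set C (Cop C (Dom C u) (Dom C v)) (Cod C u) \<and>
        Comp C (Copair C u v) (In1 C (Dom C u) (Dom C v)) = u \<and>
        Comp C (Copair C u v) (In2 C (Dom C u) (Dom C v)) = v \<and>
        (\<forall>h \<in> hom_set C (Cop C (Dom C u) (Dom C v)) (Cod C u).
            Comp C h (In1 C (Dom C u) (Dom C v)) = u \<longrightarrow>
            Comp C h (In2 C (Dom C u) (Dom C v)) = v \<longrightarrow> h = Copair C u v))"

definition zmor :: "('o,'m,'x) pcat_scheme \<Rightarrow> 'o \<Rightarrow> 'o \<Rightarrow> 'm" where
  "zmor C A B = Comp C (THE f. f \<in> hom_set C (ZeroObj C) B) (THE f. f \<in> hom_set C A (ZeroObj C))"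

text \<open>A functor C \<rightarrow> Ab: objects go to commutative groups (HOL-Algebra, written
  multiplicatively), morphisms to group homomorphisms.\<close>
definition ab_functor :: "('o,'m,'x) pcat_scheme \<Rightarrow> ('o \<Rightarrow> 'g monoid) \<Rightarrow> ('m \<Rightarrow> 'g \<Rightarrow> 'g) \<Rightarrow> bool" where
  "ab_functor C Fo Fm \<longleftrightarrow>
     (\<forall>A \<in> Obj C. comm_group (Fo A)) \<and>
     (\<forall>f \<in> Arr C. Fm f \<in> hom (Fo (Dom C f)) (Fo (Cod C f))) \<and>
     (\<forall>A \<in> Obj C. \<forall>x \<in> carrier (Fo A). Fm (Idm C A) x = x) \<and>
     (\<forall>f \<in> Arr C. \<forall>g \<in> Arr C. Cod C f = Dom C g \<longrightarrow>
        (\<forall>x \<in> carrier (Fo (Dom C f)). Fm (Comp C g f) x = Fm g (Fm f x)))"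

definition reduced_functor :: "('o,'m,'x) pcat_scheme \<Rightarrow> ('o \<Rightarrow> 'g monoid) \<Rightarrow> ('m \<Rightarrow> 'g \<Rightarrow> 'g) \<Rightarrow> bool" where
  "reduced_functor C Fo Fm \<longleftrightarrow> ab_functor C Fo Fm \<and> carrier (Fo (ZeroObj C)) = {\<one>\<^bsub>Fo (ZeroObj C)\<^esub>}"

definition ret1 :: "('o,'m,'x) pcat_scheme \<Rightarrow> 'o \<Rightarrow> 'o \<Rightarrow> 'm" where
  "ret1 C A B = Copair C (Idm C A) (zmor C B A)"
definition ret2 :: "('o,'m,'x) pcat_scheme \<Rightarrow> 'o \<Rightarrow> 'o \<Rightarrow> 'm" where
  "ret2 C A B = Copair C (zmor C A B) (Idm C B)"

text \<open>cr_2 F(A,B) = ker(F(A \<or> B) \<rightarrow> F(A) \<oplus> F(B)), the map being (F(ret1), F(ret2)).\<close>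
definition cr2 :: "('o,'m,'x) pcat_scheme \<Rightarrow> ('o \<Rightarrow> 'g monoid) \<Rightarrow> ('m \<Rightarrow> 'g \<Rightarrow> 'g) \<Rightarrow> 'o \<Rightarrow> 'o \<Rightarrow> 'g set" where
  "cr2 C Fo Fm A B = {x \<in> carrier (Fo (Cop C A B)).
      Fm (ret1 C A B) x = \<one>\<^bsub>Fo A\<^esub> \<and> Fm (ret2 C A B) x = \<one>\<^bsub>Fo B\<^esub>}"

definition cop_id :: "('o,'m,'x) pcat_scheme \<Rightarrow> 'm \<Rightarrow> 'o \<Rightarrow> 'm" where
  "cop_id C f Z = Copair C (Comp C (In1 C (Cod C f) Z) f) (In2 C (Cod C f) Z)"

text \<open>The functor cr_2 F(-,Z) : A \<mapsto> cr_2 F(A,Z) \<subseteq> F(A \<or> Z), f \<mapsto> F(f \<or> id_Z).\<close>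
definition cr2_obj :: "('o,'m,'x) pcat_scheme \<Rightarrow> ('o \<Rightarrow> 'g monoid) \<Rightarrow> ('m \<Rightarrow> 'g \<Rightarrow> 'g) \<Rightarrow> 'o \<Rightarrow> 'o \<Rightarrow> 'g monoid" where
  "cr2_obj C Fo Fm Z A = (Fo (Cop C A Z)) \<lparr>carrier := cr2 C Fo Fm A Z\<rparr>"
definition cr2_mor :: "('o,'m,'x) pcat_scheme \<Rightarrow> ('m \<Rightarrow> 'g \<Rightarrow> 'g) \<Rightarrow> 'o \<Rightarrow> 'm \<Rightarrow> 'g \<Rightarrow> 'g" where
  "cr2_mor C Fm Z f = Fm (cop_id C f Z)"

definition cr3 :: "('o,'m,'x) pcat_scheme \<Rightarrow> ('o \<Rightarrow> 'g monoid) \<Rightarrow> ('m \<Rightarrow> 'g \<Rightarrow> 'g) \<Rightarrow> 'o \<Rightarrow> 'o \<Rightarrow> 'o \<Rightarrow> 'g set" where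
  "cr3 C Fo Fm X Y Z = cr2 C (cr2_obj C Fo Fm Z) (cr2_mor C Fm Z) X Y"

definition wedge3 :: "('o,'m,'x) pcat_scheme \<Rightarrow> 'o \<Rightarrow> 'o" where
  "wedge3 C X = Cop C (Cop C X X) X"

definition fold2 :: "('o,'m,'x) pcat_scheme \<Rightarrow> 'o \<Rightarrow> 'm" where
  "fold2 C X = Copair C (Idm C X) (Idm C X)"
definition fold3 :: "('o,'m,'x) pcat_scheme \<Rightarrow> 'o \<Rightarrow> 'm" where
  "fold3 C X = Copair C (Copair C (Idm C X) (Idm C X)) (Idm C X)"

definition r1 :: "('o,'m,'x) pcat_scheme \<Rightarrow> 'o \<Rightarrow> 'm" where
  "r1 C X = Copair C (Copair C (Idm C X) (zmor C X X)) (zmor C X X)"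
definition r2 :: "('o,'m,'x) pcat_scheme \<Rightarrow> 'o \<Rightarrow> 'm" where
  "r2 C X = Copair C (Copair C (zmor C X X) (Idm C X)) (zmor C X X)"
definition r3 :: "('o,'m,'x) pcat_scheme \<Rightarrow> 'o \<Rightarrow> 'm" where
  "r3 C X = Copair C (Copair C (zmor C X X) (zmor C X X)) (Idm C X)"

definition r12 :: "('o,'m,'x) pcat_scheme \<Rightarrow> 'o \<Rightarrow> 'm" where
  "r12 C X = Copair C (Copair C (In1 C X X) (In2 C X X)) (zmor C X (Cop C X X))"
definition r13 :: "('o,'m,'x) pcat_scheme \<Rightarrow> 'o \<Rightarrow> 'm" where
  "r13 C X = Copair C (Copair C (In1 C X X) (zmor C X (Cop C X X))) (In2 C X X)"
definition r23 :: "('o,'m,'x) pcat_scheme \<Rightarrow> 'o \<Rightarrow> 'm" where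
  "r23 C X = Copair C (Copair C (zmor C X (Cop C X X)) (In1 C X X)) (In2 C X X)"

text \<open>T_2 F(X) = coker(cr_3 F(X,X,X) \<subseteq> F(X^{\<or>3}) --F(\<nabla>^3)--> F(X)).\<close>
definition T2 :: "('o,'m,'x) pcat_scheme \<Rightarrow> ('o \<Rightarrow> 'g monoid) \<Rightarrow> ('m \<Rightarrow> 'g \<Rightarrow> 'g) \<Rightarrow> 'o \<Rightarrow> 'g set monoid" where
  "T2 C Fo Fm X = Fo X Mod (Fm (fold3 C X) ` cr3 C Fo Fm X X X)"

definition T2_map :: "('o,'m,'x) pcat_scheme \<Rightarrow> ('o \<Rightarrow> 'g monoid) \<Rightarrow> ('m \<Rightarrow> 'g \<Rightarrow> 'g) \<Rightarrow> 'o \<Rightarrow> 'g \<Rightarrow> 'g" where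
  "T2_map C Fo Fm X x =
     Fm (fold3 C X) x
     \<otimes>\<^bsub>Fo X\<^esub> inv\<^bsub>Fo X\<^esub> (Fm (Comp C (fold2 C X) (r12 C X)) x)
     \<otimes>\<^bsub>Fo X\<^esub> inv\<^bsub>Fo X\<^esub> (Fm (Comp C (fold2 C X) (r13 C X)) x)
     \<otimes>\<^bsub>Fo X\<^esub> inv\<^bsub>Fo X\<^esub> (Fm (Comp C (fold2 C X) (r23 C X)) x)
     \<otimes>\<^bsub>Fo X\<^esub> Fm (r1 C X) x
     \<otimes>\<^bsub>Fo X\<^esub> Fm (r2 C X) x
     \<otimes>\<^bsub>Fo X\<^esub> Fm (r3 C X) x"

end

theory Submission
  imports Defs
begin

text \<open>Write \<open>(g\<^sub>1|g\<^sub>2|g\<^sub>3)\<close> for the alternating sum of \<open>F(g\<^sub>1 \<or> g\<^sub>2 \<or> g\<^sub>3)\<close> over all ways of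
  replacing some \<open>g\<^sub>i\<close> by zero. It is natural in the target, vanishes as soon as one \<open>g\<^sub>i\<close> is zero,
  and the given map is \<open>(id|id|id) = F(\<nabla>\<^sup>3) \<circ> (\<iota>\<^sub>1|\<iota>\<^sub>2|\<iota>\<^sub>3)\<close>. The four retractions cutting out
  \<open>cr\<^sub>3F(X,X,X)\<close> send \<open>(\<iota>\<^sub>1|\<iota>\<^sub>2|\<iota>\<^sub>3)\<close> to deviations with a zero argument, so its image lies in
  \<open>cr\<^sub>3F(X,X,X)\<close>; conversely on \<open>cr\<^sub>3F(X,X,X)\<close> all correction terms of the given map vanish and it
  agrees with \<open>F(\<nabla>\<^sup>3)\<close>. Hence both subgroups of \<open>F(X)\<close> coincide.\<close>

lemma (in comm_group) alternating_product_eq_one_iff: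
  assumes "x \<in> carrier G" "p \<in> carrier G" "q \<in> carrier G" "r \<in> carrier G"
    "s \<in> carrier G" "t \<in> carrier G" "u \<in> carrier G"
  shows "x \<otimes> inv p \<otimes> inv q \<otimes> inv r \<otimes> s \<otimes> t \<otimes> u = \<one> \<longleftrightarrow> x \<otimes> s \<otimes> t \<otimes> u = p \<otimes> q \<otimes> r"
proof -
  have "x \<otimes> inv p \<otimes> inv q \<otimes> inv r \<otimes> s \<otimes> t \<otimes> u = (x \<otimes> s \<otimes> t \<otimes> u) \<otimes> inv (p \<otimes> q \<otimes> r)"
    using assms by (simp add: inv_mult m_ac)
  then show ?thesis
    using assms by (metis m_closed inv_closed r_inv inv_equality)
qed

definition copair3 :: "('o,'m,'x) pcat_scheme \<Rightarrow> 'm \<Rightarrow> 'm \<Rightarrow> 'm \<Rightarrow> 'm" where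
  "copair3 C a b c = Copair C (Copair C a b) c"

locale pointed_coprod_cat =
  fixes C :: "('o,'m,'x) pcat_scheme"
  assumes pointed_coprod: "pointed_cat_fin_coprod C"
begin

abbreviation H where "H \<equiv> hom_set C"

lemma category: "is_category C"
  using pointed_coprod by (simp add: pointed_cat_fin_coprod_def)

lemma hom_set_objs: "f \<in> H A B \<Longrightarrow> A \<in> Obj C \<and> B \<in> Obj C"
  using category by (auto simp: is_category_def hom_set_def)

lemma comp_hom[simp]: "f \<in> H A B \<Longrightarrow> g \<in> H B D \<Longrightarrow> Comp C g f \<in> H A D"
  using category by (auto simp: is_category_def hom_set_def)

lemma comp_assoc: "f \<in> H A B \<Longrightarrow> g \<in> H B D \<Longrightarrow> h \<in> H D E \<Longrightarrow>
    Comp C h (Comp C g f) = Comp C (Comp C h g) f"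
  using category unfolding is_category_def hom_set_def by auto

lemma id_hom[simp]: "A \<in> Obj C \<Longrightarrow> Idm C A \<in> H A A"
  using category unfolding is_category_def by auto

lemma id_left[simp]: "f \<in> H A B \<Longrightarrow> Comp C (Idm C B) f = f"
  using category unfolding is_category_def hom_set_def by auto

lemma id_right[simp]: "f \<in> H A B \<Longrightarrow> Comp C f (Idm C A) = f"
  using category unfolding is_category_def hom_set_def by auto

lemma cop_obj[simp]: "A \<in> Obj C \<Longrightarrow> B \<in> Obj C \<Longrightarrow> Cop C A B \<in> Obj C"
  using pointed_coprod by (simp add: pointed_cat_fin_coprod_def)

lemma in1_hom[simp]: "A \<in> Obj C \<Longrightarrow> B \<in> Obj C \<Longrightarrow> In1 C A B \<in> H A (Cop C A B)"
  using pointed_coprod by (simp add: pointed_cat_fin_coprod_def)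

lemma in2_hom[simp]: "A \<in> Obj C \<Longrightarrow> B \<in> Obj C \<Longrightarrow> In2 C A B \<in> H B (Cop C A B)"
  using pointed_coprod by (simp add: pointed_cat_fin_coprod_def)

lemma copair_universal:
  assumes u: "u \<in> H A V" and v: "v \<in> H B V"
  shows "Copair C u v \<in> H (Cop C A B) V \<and> Comp C (Copair C u v) (In1 C A B) = u \<and>
    Comp C (Copair C u v) (In2 C A B) = v \<and>
    (\<forall>h \<in> H (Cop C A B) V. Comp C h (In1 C A B) = u \<longrightarrow> Comp C h (In2 C A B) = v \<longrightarrow> h = Copair C u v)"
proof -
  have "u \<in> Arr C" "v \<in> Arr C" "Dom C u = A" "Dom C v = B" "Cod C u = V" "Cod C v = V"
    using u v by (auto simp: hom_set_def)
  then show ?thesis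
    using pointed_coprod unfolding pointed_cat_fin_coprod_def by metis
qed

lemma copair_hom[simp]: "u \<in> H A V \<Longrightarrow> v \<in> H B V \<Longrightarrow> Copair C u v \<in> H (Cop C A B) V"
  using copair_universal by blast

lemma copair_in1[simp]: "u \<in> H A V \<Longrightarrow> v \<in> H B V \<Longrightarrow> Comp C (Copair C u v) (In1 C A B) = u"
  using copair_universal by blast

lemma copair_in2[simp]: "u \<in> H A V \<Longrightarrow> v \<in> H B V \<Longrightarrow> Comp C (Copair C u v) (In2 C A B) = v"
  using copair_universal by blast

lemma copair_unique: "u \<in> H A V \<Longrightarrow> v \<in> H B V \<Longrightarrow> h \<in> H (Cop C A B) V \<Longrightarrow>
    Comp C h (In1 C A B) = u \<Longrightarrow> Comp C h (In2 C A B) = v \<Longrightarrow> h = Copair C u v"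
  using copair_universal by blast

definition from_zero :: "'o \<Rightarrow> 'm" where
  "from_zero A = (THE f. f \<in> H (ZeroObj C) A)"

definition to_zero :: "'o \<Rightarrow> 'm" where
  "to_zero A = (THE f. f \<in> H A (ZeroObj C))"

lemma from_zero: "A \<in> Obj C \<Longrightarrow> from_zero A \<in> H (ZeroObj C) A \<and> (\<forall>f \<in> H (ZeroObj C) A. f = from_zero A)"
  using pointed_coprod theI_unique[of "\<lambda>f. f \<in> H (ZeroObj C) A"]
  unfolding pointed_cat_fin_coprod_def from_zero_def by metis

lemma to_zero: "A \<in> Obj C \<Longrightarrow> to_zero A \<in> H A (ZeroObj C) \<and> (\<forall>f \<in> H A (ZeroObj C). f = to_zero A)"
  using pointed_coprod theI_unique[of "\<lambda>f. f \<in> H A (ZeroObj C)"]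
  unfolding pointed_cat_fin_coprod_def to_zero_def by metis

lemma zmor_factor: "zmor C A B = Comp C (from_zero B) (to_zero A)"
  unfolding zmor_def from_zero_def to_zero_def ..

lemma zmor_hom[simp]: "A \<in> Obj C \<Longrightarrow> B \<in> Obj C \<Longrightarrow> zmor C A B \<in> H A B"
  unfolding zmor_factor using from_zero to_zero comp_hom by blast

lemma comp_zmor[simp]:
  assumes f: "f \<in> H B D" and A: "A \<in> Obj C"
  shows "Comp C f (zmor C A B) = zmor C A D"
proof -
  have B: "B \<in> Obj C" and D: "D \<in> Obj C" using hom_set_objs[OF f] by auto
  have "Comp C f (zmor C A B) = Comp C (Comp C f (from_zero B)) (to_zero A)"
    unfolding zmor_factor using comp_assoc[OF _ _ f] from_zero[OF B] to_zero[OF A] by blast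
  also have "Comp C f (from_zero B) = from_zero D"
    using from_zero[OF D] from_zero[OF B] f comp_hom by blast
  finally show ?thesis by (simp add: zmor_factor)
qed

lemma zmor_comp[simp]:
  assumes f: "f \<in> H A B" and D: "D \<in> Obj C"
  shows "Comp C (zmor C B D) f = zmor C A D"
proof -
  have A: "A \<in> Obj C" and B: "B \<in> Obj C" using hom_set_objs[OF f] by auto
  have "Comp C (zmor C B D) f = Comp C (from_zero D) (Comp C (to_zero B) f)"
    unfolding zmor_factor using comp_assoc[OF f] from_zero[OF D] to_zero[OF B] by metis
  also have "Comp C (to_zero B) f = to_zero A"
    using to_zero[OF A] to_zero[OF B] f comp_hom by blast
  finally show ?thesis by (simp add: zmor_factor)
qed

lemma comp_copair:
  assumes u: "u \<in> H A V" and v: "v \<in> H B V" and h: "h \<in> H V E"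
  shows "Comp C h (Copair C u v) = Copair C (Comp C h u) (Comp C h v)"
proof (rule copair_unique[where A = A and B = B and V = E])
  have A: "A \<in> Obj C" and B: "B \<in> Obj C" using hom_set_objs u v by auto
  have uv: "Copair C u v \<in> H (Cop C A B) V" using u v by simp
  show "Comp C (Comp C h (Copair C u v)) (In1 C A B) = Comp C h u"
    using comp_assoc[OF in1_hom[OF A B] uv h] u v by simp
  show "Comp C (Comp C h (Copair C u v)) (In2 C A B) = Comp C h v"
    using comp_assoc[OF in2_hom[OF A B] uv h] u v by simp
qed (use u v h comp_hom[OF copair_hom[OF u v] h] in auto)

lemma copair_in1_in2: "A \<in> Obj C \<Longrightarrow> B \<in> Obj C \<Longrightarrow> Copair C (In1 C A B) (In2 C A B) = Idm C (Cop C A B)"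
  by (rule copair_unique[where A = A and B = B and V = "Cop C A B", symmetric])
    (auto simp: id_left[OF in1_hom] id_left[OF in2_hom])

lemma copair_zmor: "A \<in> Obj C \<Longrightarrow> B \<in> Obj C \<Longrightarrow> V \<in> Obj C \<Longrightarrow>
    Copair C (zmor C A V) (zmor C B V) = zmor C (Cop C A B) V"
  by (rule copair_unique[where A = A and B = B and V = V, symmetric]) auto

end

locale triple_wedge = pointed_coprod_cat C for C :: "('o,'m,'x) pcat_scheme" +
  fixes X :: 'o
  assumes X_obj[simp]: "X \<in> Obj C"
begin

abbreviation "X2 \<equiv> Cop C X X"
abbreviation "X3 \<equiv> Cop C X2 X"
abbreviation "inj1 \<equiv> Comp C (In1 C X2 X) (In1 C X X)"
abbreviation "inj2 \<equiv> Comp C (In1 C X2 X) (In2 C X X)"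
abbreviation "inj3 \<equiv> In2 C X2 X"

lemma inj_hom[simp]: "inj1 \<in> H X X3" "inj2 \<in> H X X3" "inj3 \<in> H X X3"
  by (blast intro: comp_hom in1_hom in2_hom cop_obj X_obj)+

lemma copair3_hom[simp]: "a \<in> H X V \<Longrightarrow> b \<in> H X V \<Longrightarrow> c \<in> H X V \<Longrightarrow> copair3 C a b c \<in> H X3 V"
  unfolding copair3_def by simp

lemma copair3_inj[simp]:
  assumes "a \<in> H X V" "b \<in> H X V" "c \<in> H X V"
  shows "Comp C (copair3 C a b c) inj1 = a" "Comp C (copair3 C a b c) inj2 = b"
    "Comp C (copair3 C a b c) inj3 = c"
proof -
  have abc: "copair3 C a b c \<in> H X3 V" and ab: "Copair C a b \<in> H X2 V" using assms by simp_all
  show "Comp C (copair3 C a b c) inj1 = a"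
    using comp_assoc[OF in1_hom[OF X_obj X_obj] in1_hom[OF cop_obj[OF X_obj X_obj] X_obj] abc] assms ab
    by (simp add: copair3_def)
  show "Comp C (copair3 C a b c) inj2 = b"
    using comp_assoc[OF in2_hom[OF X_obj X_obj] in1_hom[OF cop_obj[OF X_obj X_obj] X_obj] abc] assms ab
    by (simp add: copair3_def)
  show "Comp C (copair3 C a b c) inj3 = c"
    using copair_in2[OF ab assms(3)] by (simp add: copair3_def)
qed

lemma comp_copair3: "g \<in> H V E \<Longrightarrow> a \<in> H X V \<Longrightarrow> b \<in> H X V \<Longrightarrow> c \<in> H X V \<Longrightarrow>
    Comp C g (copair3 C a b c) = copair3 C (Comp C g a) (Comp C g b) (Comp C g c)"
  unfolding copair3_def
  by (subst comp_copair[where A = X2 and B = X], simp_all, subst comp_copair[where A = X and B = X], auto)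

lemma copair3_zmor: "V \<in> Obj C \<Longrightarrow> copair3 C (zmor C X V) (zmor C X V) (zmor C X V) = zmor C X3 V"
  unfolding copair3_def by (simp add: copair_zmor)

abbreviation "zX \<equiv> zmor C X X"
abbreviation "zX2 \<equiv> zmor C X X2"

lemma wedge3_maps_copair3:
  "fold3 C X = copair3 C (Idm C X) (Idm C X) (Idm C X)"
  "r1 C X = copair3 C (Idm C X) zX zX" "r2 C X = copair3 C zX (Idm C X) zX"
  "r3 C X = copair3 C zX zX (Idm C X)"
  "r12 C X = copair3 C (In1 C X X) (In2 C X X) zX2"
  "r13 C X = copair3 C (In1 C X X) zX2 (In2 C X X)"
  "r23 C X = copair3 C zX2 (In1 C X X) (In2 C X X)"
  by (simp_all add: fold3_def r1_def r2_def r3_def r12_def r13_def r23_def copair3_def)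

lemma ret_hom[simp]: "ret1 C X X \<in> H X2 X" "ret2 C X X \<in> H X2 X"
  unfolding ret1_def ret2_def by simp_all

lemma fold2_hom[simp]: "fold2 C X \<in> H X2 X"
  unfolding fold2_def by simp

lemma ret1_eq_r12: "ret1 C X2 X = r12 C X"
  unfolding ret1_def r12_def by (simp add: copair_in1_in2)

lemma ret2_eq_r3: "ret2 C X2 X = r3 C X"
  unfolding ret2_def r3_def by (simp add: copair_zmor)

lemma cop_id_ret1_eq_r13: "cop_id C (ret1 C X X) X = r13 C X"
proof -
  have "Cod C (ret1 C X X) = X" using ret_hom by (simp add: hom_set_def)
  moreover have "Comp C (In1 C X X) (ret1 C X X) = Copair C (In1 C X X) zX2"
    unfolding ret1_def
    by (subst comp_copair[where A = X and B = X and V = X and E = X2])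
      (auto simp: id_right[OF in1_hom] comp_zmor[OF in1_hom])
  ultimately show ?thesis unfolding cop_id_def r13_def by simp
qed

lemma cop_id_ret2_eq_r23: "cop_id C (ret2 C X X) X = r23 C X"
proof -
  have "Cod C (ret2 C X X) = X" using ret_hom by (simp add: hom_set_def)
  moreover have "Comp C (In1 C X X) (ret2 C X X) = Copair C zX2 (In1 C X X)"
    unfolding ret2_def
    by (subst comp_copair[where A = X and B = X and V = X and E = X2])
      (auto simp: id_right[OF in1_hom] comp_zmor[OF in1_hom])
  ultimately show ?thesis unfolding cop_id_def r23_def by simp
qed

lemma ret_comp_r12: "Comp C (ret1 C X X) (r12 C X) = r1 C X" "Comp C (ret2 C X X) (r12 C X) = r2 C X"
  unfolding wedge3_maps_copair3
  using copair_in1[of "Idm C X" X X zX X] copair_in2[of "Idm C X" X X zX X]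
    copair_in1[of zX X X "Idm C X" X] copair_in2[of zX X X "Idm C X" X]
  by (simp_all add: comp_copair3[where V = X2 and E = X] ret1_def ret2_def
      comp_zmor[OF ret_hom(1)[unfolded ret1_def]] comp_zmor[OF ret_hom(2)[unfolded ret2_def]] del: ret_hom)

lemma fold2_comp_r: "Comp C (fold2 C X) (r12 C X) = copair3 C (Idm C X) (Idm C X) zX"
  "Comp C (fold2 C X) (r13 C X) = copair3 C (Idm C X) zX (Idm C X)"
  "Comp C (fold2 C X) (r23 C X) = copair3 C zX (Idm C X) (Idm C X)"
  unfolding wedge3_maps_copair3
  using copair_in1[of "Idm C X" X X "Idm C X" X] copair_in2[of "Idm C X" X X "Idm C X" X]
  by (simp_all add: comp_copair3[where V = X2 and E = X] fold2_def
      comp_zmor[OF fold2_hom[unfolded fold2_def]] del: fold2_hom)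

end

locale wedge3_functor = triple_wedge C X for C :: "('o,'m,'x) pcat_scheme" and X :: 'o +
  fixes Fo :: "'o \<Rightarrow> 'g monoid" and Fm :: "'m \<Rightarrow> 'g \<Rightarrow> 'g"
  assumes reduced: "reduced_functor C Fo Fm"
begin

lemma F_comm_group[simp]: "A \<in> Obj C \<Longrightarrow> comm_group (Fo A)"
  using reduced by (simp add: reduced_functor_def ab_functor_def)

lemma F_hom: "f \<in> H A B \<Longrightarrow> Fm f \<in> hom (Fo A) (Fo B)"
  using reduced by (auto simp: reduced_functor_def ab_functor_def hom_set_def)

lemma F_group_hom: "f \<in> H A B \<Longrightarrow> group_hom (Fo A) (Fo B) (Fm f)"
proof -
  assume f: "f \<in> H A B"
  then have "A \<in> Obj C" "B \<in> Obj C" using hom_set_objs by auto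
  then show ?thesis
    using F_hom[OF f] by (simp add: group_hom_def group_hom_axioms_def comm_group.axioms(2))
qed

lemma F_closed[simp]: "f \<in> H A B \<Longrightarrow> x \<in> carrier (Fo A) \<Longrightarrow> Fm f x \<in> carrier (Fo B)"
  using F_hom by (auto simp: hom_def)

lemma F_one: "f \<in> H A B \<Longrightarrow> Fm f \<one>\<^bsub>Fo A\<^esub> = \<one>\<^bsub>Fo B\<^esub>"
  by (rule group_hom.hom_one[OF F_group_hom])

lemma F_comp: "f \<in> H A B \<Longrightarrow> g \<in> H B D \<Longrightarrow> x \<in> carrier (Fo A) \<Longrightarrow> Fm (Comp C g f) x = Fm g (Fm f x)"
  using reduced unfolding reduced_functor_def ab_functor_def hom_set_def by auto

lemma F_comp_eq_one: "f \<in> H A B \<Longrightarrow> g \<in> H B D \<Longrightarrow> x \<in> carrier (Fo A) \<Longrightarrow>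
    Fm f x = \<one>\<^bsub>Fo B\<^esub> \<Longrightarrow> Fm (Comp C g f) x = \<one>\<^bsub>Fo D\<^esub>"
  by (simp add: F_comp F_one)

lemma F_zmor:
  assumes A: "A \<in> Obj C" and B: "B \<in> Obj C" and x: "x \<in> carrier (Fo A)"
  shows "Fm (zmor C A B) x = \<one>\<^bsub>Fo B\<^esub>"
proof -
  have t: "to_zero A \<in> H A (ZeroObj C)" and i: "from_zero B \<in> H (ZeroObj C) B"
    using to_zero[OF A] from_zero[OF B] by auto
  have "Fm (to_zero A) x = \<one>\<^bsub>Fo (ZeroObj C)\<^esub>"
    using F_closed[OF t x] reduced by (simp add: reduced_functor_def)
  then show ?thesis unfolding zmor_factor by (rule F_comp_eq_one[OF t i x])
qed

lemma F_copair3_closed[simp]: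
  "a \<in> H X V \<Longrightarrow> b \<in> H X V \<Longrightarrow> c \<in> H X V \<Longrightarrow> x \<in> carrier (Fo X3) \<Longrightarrow>
    Fm (copair3 C a b c) x \<in> carrier (Fo V)"
  by (rule F_closed[OF copair3_hom])

text \<open>Baues' deviation \<open>(g\<^sub>1|g\<^sub>2|g\<^sub>3)\<close>; its eighth term \<open>F(0 \<or> 0 \<or> 0)\<close> is trivial and omitted.\<close>
definition deviation3 :: "'o \<Rightarrow> 'm \<Rightarrow> 'm \<Rightarrow> 'm \<Rightarrow> 'g \<Rightarrow> 'g" where
  "deviation3 V g1 g2 g3 x =
     Fm (copair3 C g1 g2 g3) x
     \<otimes>\<^bsub>Fo V\<^esub> inv\<^bsub>Fo V\<^esub> (Fm (copair3 C g1 g2 (zmor C X V)) x)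
     \<otimes>\<^bsub>Fo V\<^esub> inv\<^bsub>Fo V\<^esub> (Fm (copair3 C g1 (zmor C X V) g3) x)
     \<otimes>\<^bsub>Fo V\<^esub> inv\<^bsub>Fo V\<^esub> (Fm (copair3 C (zmor C X V) g2 g3) x)
     \<otimes>\<^bsub>Fo V\<^esub> Fm (copair3 C g1 (zmor C X V) (zmor C X V)) x
     \<otimes>\<^bsub>Fo V\<^esub> Fm (copair3 C (zmor C X V) g2 (zmor C X V)) x
     \<otimes>\<^bsub>Fo V\<^esub> Fm (copair3 C (zmor C X V) (zmor C X V) g3) x"

lemma deviation3_closed:
  assumes "g1 \<in> H X V" "g2 \<in> H X V" "g3 \<in> H X V" "x \<in> carrier (Fo X3)"
  shows "deviation3 V g1 g2 g3 x \<in> carrier (Fo V)"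
proof -
  have V: "V \<in> Obj C" using hom_set_objs assms(1) by blast
  interpret comm_group "Fo V" using V by simp
  show ?thesis unfolding deviation3_def using assms V by simp
qed

lemma deviation3_natural:
  assumes g: "g1 \<in> H X V" "g2 \<in> H X V" "g3 \<in> H X V" and h: "h \<in> H V E"
    and x: "x \<in> carrier (Fo X3)"
  shows "Fm h (deviation3 V g1 g2 g3 x) =
    deviation3 E (Comp C h g1) (Comp C h g2) (Comp C h g3) x"
proof -
  have V: "V \<in> Obj C" using hom_set_objs h by blast
  interpret comm_group "Fo V" using V by simp
  interpret h: group_hom "Fo V" "Fo E" "Fm h" by (rule F_group_hom[OF h])
  have F_h: "Fm h (Fm (copair3 C a b c) x) = Fm (copair3 C (Comp C h a) (Comp C h b) (Comp C h c)) x"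
    if "a \<in> H X V" "b \<in> H X V" "c \<in> H X V" for a b c
    using that F_comp[OF copair3_hom[OF that] h x] comp_copair3[OF h that] by simp
  have "Comp C h (zmor C X V) = zmor C X E" using h by simp
  then show ?thesis
    unfolding deviation3_def using g V x by (simp add: F_h h.hom_mult h.hom_inv)
qed

text \<open>With one argument zero the seven terms, together with the trivial term
  \<open>F(0 \<or> 0 \<or> 0)\<close>, cancel in pairs.\<close>
lemma deviation3_zmor_arg:
  assumes g: "g1 \<in> H X V" "g2 \<in> H X V" "g3 \<in> H X V" and x: "x \<in> carrier (Fo X3)"
    and zero_arg: "g1 = zmor C X V \<or> g2 = zmor C X V \<or> g3 = zmor C X V"
  shows "deviation3 V g1 g2 g3 x = \<one>\<^bsub>Fo V\<^esub>"
proof -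
  have V: "V \<in> Obj C" using hom_set_objs g(1) by blast
  interpret comm_group "Fo V" using V by simp
  have zero: "Fm (copair3 C (zmor C X V) (zmor C X V) (zmor C X V)) x = \<one>\<^bsub>Fo V\<^esub>"
    using V x by (simp add: copair3_zmor F_zmor)
  show ?thesis
    unfolding deviation3_def
    by (subst alternating_product_eq_one_iff; use g V x zero_arg zero in \<open>auto simp: m_ac\<close>)
qed

lemma F_copair3_deviation3_inj:
  assumes g: "g1 \<in> H X V" "g2 \<in> H X V" "g3 \<in> H X V" and x: "x \<in> carrier (Fo X3)"
  shows "Fm (copair3 C g1 g2 g3) (deviation3 X3 inj1 inj2 inj3 x) = deviation3 V g1 g2 g3 x"
  using deviation3_natural[OF inj_hom copair3_hom[OF g] x] g by simp

lemma T2_map_eq_deviation3: "T2_map C Fo Fm X x = deviation3 X (Idm C X) (Idm C X) (Idm C X) x"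
  unfolding T2_map_def fold2_comp_r
  unfolding wedge3_maps_copair3 deviation3_def ..

text \<open>The retractions of \<open>(X \<or> X) \<or> X\<close> onto \<open>X \<or> X\<close> and \<open>X\<close> are \<open>r\<^sub>1\<^sub>2\<close> and \<open>r\<^sub>3\<close>, and
  applying \<open>- \<or> id\<^sub>X\<close> to the retractions of \<open>X \<or> X\<close> gives \<open>r\<^sub>1\<^sub>3\<close> and \<open>r\<^sub>2\<^sub>3\<close>.\<close>
lemma cr3_iff:
  "y \<in> cr3 C Fo Fm X X X \<longleftrightarrow> y \<in> carrier (Fo X3) \<and>
    Fm (r12 C X) y = \<one>\<^bsub>Fo X2\<^esub> \<and> Fm (r3 C X) y = \<one>\<^bsub>Fo X\<^esub> \<and>
    Fm (r13 C X) y = \<one>\<^bsub>Fo X2\<^esub> \<and> Fm (r23 C X) y = \<one>\<^bsub>Fo X2\<^esub>"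
  unfolding cr3_def cr2_def cr2_obj_def cr2_mor_def
  by (auto simp: ret1_eq_r12 ret2_eq_r3 cop_id_ret1_eq_r13 cop_id_ret2_eq_r23)

lemma T2_map_on_cr3:
  assumes y: "y \<in> cr3 C Fo Fm X X X"
  shows "T2_map C Fo Fm X y = Fm (fold3 C X) y"
proof -
  have yc: "y \<in> carrier (Fo X3)" and y12: "Fm (r12 C X) y = \<one>\<^bsub>Fo X2\<^esub>"
    and y3: "Fm (r3 C X) y = \<one>\<^bsub>Fo X\<^esub>" and y13: "Fm (r13 C X) y = \<one>\<^bsub>Fo X2\<^esub>"
    and y23: "Fm (r23 C X) y = \<one>\<^bsub>Fo X2\<^esub>"
    using y cr3_iff by auto
  have r_hom: "r12 C X \<in> H X3 X2" "r13 C X \<in> H X3 X2" "r23 C X \<in> H X3 X2"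
    "fold3 C X \<in> H X3 X"
    unfolding wedge3_maps_copair3 by simp_all
  note vanish = F_comp_eq_one[OF r_hom(1) fold2_hom yc y12]
    F_comp_eq_one[OF r_hom(2) fold2_hom yc y13] F_comp_eq_one[OF r_hom(3) fold2_hom yc y23]
    F_comp_eq_one[OF r_hom(1) ret_hom(1) yc y12, unfolded ret_comp_r12]
    F_comp_eq_one[OF r_hom(1) ret_hom(2) yc y12, unfolded ret_comp_r12]
  interpret comm_group "Fo X" by simp
  show ?thesis
    unfolding T2_map_def vanish y3 using F_closed[OF r_hom(4) yc] by simp
qed

lemma cross_projection:
  assumes x: "x \<in> carrier (Fo X3)"
  shows "deviation3 X3 inj1 inj2 inj3 x \<in> cr3 C Fo Fm X X X"
    and "Fm (fold3 C X) (deviation3 X3 inj1 inj2 inj3 x) = T2_map C Fo Fm X x"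
proof -
  have homs: "In1 C X X \<in> H X X2" "In2 C X X \<in> H X X2" "zX2 \<in> H X X2"
    "Idm C X \<in> H X X" "zX \<in> H X X"
    by simp_all
  note F_proj = F_copair3_deviation3_inj[OF _ _ _ x]
  show "deviation3 X3 inj1 inj2 inj3 x \<in> cr3 C Fo Fm X X X"
    unfolding cr3_iff wedge3_maps_copair3
    using x homs by (simp add: F_proj[where V = X2] F_proj[where V = X] deviation3_closed
        deviation3_zmor_arg)
  show "Fm (fold3 C X) (deviation3 X3 inj1 inj2 inj3 x) = T2_map C Fo Fm X x"
    unfolding wedge3_maps_copair3 T2_map_eq_deviation3 using homs by (simp add: F_proj[where V = X])
qed

lemma fold3_image_cr3: "Fm (fold3 C X) ` cr3 C Fo Fm X X X = T2_map C Fo Fm X ` carrier (Fo X3)"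
proof
  show "Fm (fold3 C X) ` cr3 C Fo Fm X X X \<subseteq> T2_map C Fo Fm X ` carrier (Fo X3)"
    using T2_map_on_cr3 cr3_iff by (metis image_subsetI rev_image_eqI)
  show "T2_map C Fo Fm X ` carrier (Fo X3) \<subseteq> Fm (fold3 C X) ` cr3 C Fo Fm X X X"
    using cross_projection by (metis image_subsetI rev_image_eqI)
qed

end

theorem proposition2p17:
  fixes C :: "('o, 'm, 'x) pcat_scheme"
    and Fo :: "'o \<Rightarrow> 'g monoid" and Fm :: "'m \<Rightarrow> 'g \<Rightarrow> 'g"
    and X :: 'o
  assumes "pointed_cat_fin_coprod C"
    and "reduced_functor C Fo Fm"
    and "X \<in> Obj C"
  shows "T2 C Fo Fm X = Fo X Mod (T2_map C Fo Fm X ` carrier (Fo (wedge3 C X)))"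
proof -
  interpret wedge3_functor C X Fo Fm
    using assms by unfold_locales
  show ?thesis
    unfolding T2_def wedge3_def fold3_image_cr3 ..
qed

end
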